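(* Consider the fixed-design additive regression setting, the estimator $\hat g$ and tuning parameters described in the context, and assume the sub-Gaussian noise condition and the entropy condition hold. Let $\bar g=\sum_{j=1}^p\bar g_j\in\mathcal G$ be arbitrary. Then for any $A_0>1$, with probability at least $1-\epsilon$, $$\tfrac12\|\hat g-g^*\|_n^2+\tfrac12\|\hat g-\bar g\|_n^2+(A_0-1)R_n(\hat g-\bar g)\le \tfrac12\|\bar g-g^*\|_n^2+2A_0R_n(\bar g),$$ where $R_n(\hat g-\bar g)=\sum_j\{\rho_{nj}\|\hat g_j-\bar g_j\|_{F,j}+\lambda_{nj}\|\hat g_j-\bar g_j\|_n\}$.
   Context: Data: $(Y_i,X_i)$, $i=1,\dots,n$, with $Y_i\in\mathbb R$, $X_i\in\mathbb R^d$, $Y_i=g^*(X_i)+\varepsilon_i$, where $g^*$ is an arbitrary (not necessarily additive) function. Fixed design: $X_1,\dots,X_n$ are deterministic and probabilities refer to the noise. For $j=1,\dots,p$, $x^{(j)}$ is a fixed sub-vector of coordinates of $x$, $\mathcal G_j$ is a vector space of real functions of $x^{(j)}$ with a semi-norm $\|\cdot\|_{F,j}$, and $\mathcal G=\{g(x)=\sum_{j=1}^pg_j(x^{(j)}):g_j\in\mathcal G_j\}$; every $g\in\mathcal G$ comes with a decomposition $g=\sum_jg_j$ to which component-wise quantities refer. $\|f\|_n^2=n^{-1}\sum_if(X_i)^2$, $\|Y-g\|_n^2=n^{-1}\sum_i\{Y_i-g(X_i)\}^2$, $\langle\varepsilon,f\rangle_n=n^{-1}\sum_i\varepsilon_if(X_i)$.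 $H(u,\mathcal F,\|\cdot\|)$ is the log covering number at radius $u$. Sub-Gaussian noise condition: $\varepsilon_i$ independent, mean zero, $\max_iD_0E\exp(\varepsilon_i^2/D_0)\le D_1$. $C_1=C_1(D_0,D_1)>0$ is a constant depending only on $(D_0,D_1)$ such that for every $\delta>0$, every class $\mathcal F$ with $\sup_{\mathcal F}\|f\|_n\le\delta$ and every $\psi\ge\int_0^\delta H^{1/2}(u,\mathcal F,\|\cdot\|_n)du$, $P\{\sup_{\mathcal F}|\langle\varepsilon,f\rangle_n|/C_1>n^{-1/2}\psi+\delta\sqrt{t/n}\}\le e^{-t}$ for all $t>0$. Entropy condition: with $\mathcal G_j(\delta)=\{f\in\mathcal G_j:\|f\|_{F,j}+\|f\|_n/\delta\le1\}$, $\psi_{nj}(\delta)\ge\int_0^\delta H^{1/2}(u,\mathcal G_j(\delta),\|\cdot\|_n)du$ for $0<\delta\le1$. Tuning and estimator: $0<\epsilon<1$, $0<w_{nj}\le1$, $\gamma_{nj}=n^{-1/2}\psi_{nj}(w_{nj})/w_{nj}$, $\lambda_{nj}=C_1\{\gamma_{nj}+\sqrt{\log(p/\epsilon)/n}\}$, $\rho_{nj}=\lambda_{nj}w_{nj}$, $R_n(g)=\sum_j(\rho_{nj}\|g_j\|_{F,j}+\lambda_{nj}\|g_j\|_n)$; $\hat g=\sum_j\hat g_j$ minimizes $K_n(g)=\|Y-g\|_n^2/2+A_0R_n(g)$ over $g\in\mathcal G$ and decompositions. *)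

theory Defs
  imports "HOL-Probability.Probability"
begin

definition emp_norm :: "nat \<Rightarrow> (nat \<Rightarrow> 'x) \<Rightarrow> ('x \<Rightarrow> real) \<Rightarrow> real" where
  "emp_norm n X f = sqrt ((\<Sum>i<n. (f (X i))\<^sup>2) / real n)"

definition emp_dist :: "nat \<Rightarrow> (nat \<Rightarrow> 'x) \<Rightarrow> ('x \<Rightarrow> real) \<Rightarrow> ('x \<Rightarrow> real) \<Rightarrow> real" where
  "emp_dist n X f g = emp_norm n X (\<lambda>x. f x - g x)"

definition emp_inner :: "nat \<Rightarrow> (nat \<Rightarrow> 'x) \<Rightarrow> (nat \<Rightarrow> real) \<Rightarrow> ('x \<Rightarrow> real) \<Rightarrow> real" where
  "emp_inner n X v f = (\<Sum>i<n. v i * f (X i)) / real n"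

definition emp_loss :: "nat \<Rightarrow> (nat \<Rightarrow> 'x) \<Rightarrow> (nat \<Rightarrow> real) \<Rightarrow> ('x \<Rightarrow> real) \<Rightarrow> real" where
  "emp_loss n X y g = (\<Sum>i<n. (y i - g (X i))\<^sup>2) / real n"

text \<open>Covering number at radius u (closed balls, arbitrary centers), infinite if no
  finite cover exists; square root of the log covering number; entropy integral.\<close>

definition covering_number ::
  "(('x \<Rightarrow> real) \<Rightarrow> ('x \<Rightarrow> real) \<Rightarrow> real) \<Rightarrow> real \<Rightarrow> ('x \<Rightarrow> real) set \<Rightarrow> enat" where
  "covering_number d u F =
     Inf {enat (card C) | C. finite C \<and> (\<forall>f\<in>F. \<exists>c\<in>C. d f c \<le> u)}"

definition sqrt_entropy ::
  "(('x \<Rightarrow> real) \<Rightarrow> ('x \<Rightarrow> real) \<Rightarrow> real) \<Rightarrow> real \<Rightarrow> ('x \<Rightarrow> real) set \<Rightarrow> ennreal" where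
  "sqrt_entropy d u F =
     (case covering_number d u F of
        enat k \<Rightarrow> ennreal (sqrt (ln (max 1 (real k))))
      | \<infinity> \<Rightarrow> \<infinity>)"

definition entropy_integral ::
  "(('x \<Rightarrow> real) \<Rightarrow> ('x \<Rightarrow> real) \<Rightarrow> real) \<Rightarrow> real \<Rightarrow> ('x \<Rightarrow> real) set \<Rightarrow> ennreal" where
  "entropy_integral d \<delta> F =
     (\<integral>\<^sup>+ u. indicator {0<..\<delta>} u * sqrt_entropy d u F \<partial>lborel)"

text \<open>The real number psi dominates the (extended, nonnegative) entropy integral I:
  this is the meaning of "psi >= integral" for real psi.\<close>
definition real_ge_integral :: "real \<Rightarrow> ennreal \<Rightarrow> bool" where
  "real_ge_integral \<psi> I \<longleftrightarrow> 0 \<le> \<psi> \<and> I \<le> ennreal \<psi>"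

definition sub_gaussian_concentration ::
  "'w measure \<Rightarrow> nat \<Rightarrow> (nat \<Rightarrow> 'x) \<Rightarrow> (nat \<Rightarrow> 'w \<Rightarrow> real) \<Rightarrow> real \<Rightarrow> bool" where
  "sub_gaussian_concentration M n X e C1 \<longleftrightarrow>
     (\<forall>\<delta>>0. \<forall>F. (\<forall>f\<in>F. emp_norm n X f \<le> \<delta>) \<longrightarrow>
        (\<forall>\<psi>. real_ge_integral \<psi> (entropy_integral (emp_dist n X) \<delta> F) \<longrightarrow>
          (\<forall>t>0. measure M {\<omega> \<in> space M. \<exists>f\<in>F.
                 \<bar>emp_inner n X (\<lambda>i. e i \<omega>) f\<bar> / C1 > \<psi> / sqrt (real n) + \<delta> * sqrt (t / real n)}
               \<le> exp (- t))))"

definition fun_subspace :: "('x \<Rightarrow> real) set \<Rightarrow> bool" where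
  "fun_subspace G \<longleftrightarrow> (\<lambda>_. 0) \<in> G \<and> (\<forall>f\<in>G. \<forall>g\<in>G. (\<lambda>x. f x + g x) \<in> G)
     \<and> (\<forall>c. \<forall>f\<in>G. (\<lambda>x. c * f x) \<in> G)"

definition seminorm_on :: "('x \<Rightarrow> real) set \<Rightarrow> (('x \<Rightarrow> real) \<Rightarrow> real) \<Rightarrow> bool" where
  "seminorm_on G N \<longleftrightarrow> (\<forall>f\<in>G. 0 \<le> N f) \<and> (\<forall>c. \<forall>f\<in>G. N (\<lambda>x. c * f x) = \<bar>c\<bar> * N f)
     \<and> (\<forall>f\<in>G. \<forall>g\<in>G. N (\<lambda>x. f x + g x) \<le> N f + N g)"

definition depends_only_on :: "'d set \<Rightarrow> (real ^ 'd \<Rightarrow> real) \<Rightarrow> bool" where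
  "depends_only_on S f \<longleftrightarrow> (\<forall>x y. (\<forall>k\<in>S. x $ k = y $ k) \<longrightarrow> f x = f y)"

definition local_class ::
  "nat \<Rightarrow> (nat \<Rightarrow> 'x) \<Rightarrow> ('x \<Rightarrow> real) set \<Rightarrow> (('x \<Rightarrow> real) \<Rightarrow> real) \<Rightarrow> real \<Rightarrow> ('x \<Rightarrow> real) set" where
  "local_class n X G N \<delta> = {f \<in> G. N f + emp_norm n X f / \<delta> \<le> 1}"

definition tune_lambda :: "nat \<Rightarrow> nat \<Rightarrow> real \<Rightarrow> real \<Rightarrow> (nat \<Rightarrow> real \<Rightarrow> real) \<Rightarrow> (nat \<Rightarrow> real) \<Rightarrow> nat \<Rightarrow> real" where
  "tune_lambda n p eps C1 psi w j =
     C1 * (psi j (w j) / (sqrt (real n) * w j) + sqrt (ln (real p / eps) / real n))"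

definition tune_rho :: "nat \<Rightarrow> nat \<Rightarrow> real \<Rightarrow> real \<Rightarrow> (nat \<Rightarrow> real \<Rightarrow> real) \<Rightarrow> (nat \<Rightarrow> real) \<Rightarrow> nat \<Rightarrow> real" where
  "tune_rho n p eps C1 psi w j = tune_lambda n p eps C1 psi w j * w j"

definition penalty ::
  "nat \<Rightarrow> (nat \<Rightarrow> 'x) \<Rightarrow> nat \<Rightarrow> (nat \<Rightarrow> ('x \<Rightarrow> real) \<Rightarrow> real) \<Rightarrow> (nat \<Rightarrow> real) \<Rightarrow> (nat \<Rightarrow> real)
    \<Rightarrow> (nat \<Rightarrow> 'x \<Rightarrow> real) \<Rightarrow> real" where
  "penalty n X p Fn lam rho gs = (\<Sum>j<p. rho j * Fn j (gs j) + lam j * emp_norm n X (gs j))"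

definition add_fun :: "nat \<Rightarrow> (nat \<Rightarrow> 'x \<Rightarrow> real) \<Rightarrow> 'x \<Rightarrow> real" where
  "add_fun p gs = (\<lambda>x. \<Sum>j<p. gs j x)"

end

theory Submission
  imports Defs
begin

text \<open>On the event where, for every j, the noise correlates with the normalised local class
  G_j(w_j) by at most its sub-Gaussian threshold, homogeneity extends this bound to all of G_j as
  |<e, f>_n| \<le> rho_j ||f||_F + lambda_j ||f||_n; a union bound over the p components gives
  probability 1 - eps. On that event the result is deterministic: optimality of the estimator
  against the segment towards gbar yields, in the limit, the first-order inequality
  <Y - ghat, ghat - gbar>_n \<ge> A0 (R(ghat) - R(gbar)), and the three-point identity for the
  empirical norm turns it, together with R(ghat - gbar) \<le> R(ghat) + R(gbar), into the bound.\<close>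

lemma emp_norm_sq: "(emp_norm n X f)\<^sup>2 = (\<Sum>i<n. (f (X i))\<^sup>2) / real n"
  unfolding emp_norm_def by (simp add: sum_nonneg)

lemma emp_norm_nonneg: "0 \<le> emp_norm n X f"
  unfolding emp_norm_def by (simp add: sum_nonneg)

lemma emp_norm_triangle: "emp_norm n X (\<lambda>x. f x + g x) \<le> emp_norm n X f + emp_norm n X g"
proof -
  have L2: "emp_norm n X h = L2_set (\<lambda>i. h (X i)) {..<n} / sqrt (real n)" for h
    unfolding emp_norm_def L2_set_def by (simp add: real_sqrt_divide)
  have "L2_set (\<lambda>i. f (X i) + g (X i)) {..<n}
      \<le> L2_set (\<lambda>i. f (X i)) {..<n} + L2_set (\<lambda>i. g (X i)) {..<n}"
    by (rule L2_set_triangle_ineq)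
  then show ?thesis
    unfolding L2 by (simp add: add_divide_distrib[symmetric] divide_right_mono)
qed

lemma emp_norm_scale: "emp_norm n X (\<lambda>x. c * f x) = \<bar>c\<bar> * emp_norm n X f"
proof -
  have "(\<Sum>i<n. (c * f (X i))\<^sup>2) = c\<^sup>2 * (\<Sum>i<n. (f (X i))\<^sup>2)"
    by (simp add: power_mult_distrib sum_distrib_left)
  then have sq: "(\<Sum>i<n. (c * f (X i))\<^sup>2) / real n = c\<^sup>2 * ((\<Sum>i<n. (f (X i))\<^sup>2) / real n)"
    by simp
  show ?thesis
    unfolding emp_norm_def sq real_sqrt_mult by simp
qed

lemma emp_norm_lin:
  "emp_norm n X (\<lambda>x. a * f x + b * g x) \<le> \<bar>a\<bar> * emp_norm n X f + \<bar>b\<bar> * emp_norm n X g"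
  using emp_norm_triangle[of n X "\<lambda>x. a * f x" "\<lambda>x. b * g x"]
  by (simp add: emp_norm_scale)

lemma emp_norm_diff: "emp_norm n X (\<lambda>x. f x - g x) \<le> emp_norm n X f + emp_norm n X g"
  using emp_norm_lin[of n X 1 f "-1" g] by simp

lemma emp_norm_eq_0_imp:
  assumes "emp_norm n X f = 0" "i < n"
  shows "f (X i) = 0"
proof -
  from assms have "(\<Sum>i<n. (f (X i))\<^sup>2) = 0"
    using emp_norm_sq[of n X f] by simp
  then have "\<forall>i\<in>{..<n}. (f (X i))\<^sup>2 = 0"
    by (subst (asm) sum_nonneg_eq_0_iff) auto
  with assms(2) show ?thesis by simp
qed

lemma emp_inner_scale: "emp_inner n X v (\<lambda>x. c * f x) = c * emp_inner n X v f"
  unfolding emp_inner_def by (simp add: sum_distrib_left algebra_simps)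

lemma emp_inner_add_fun:
  "emp_inner n X v (add_fun p gs) = (\<Sum>j<p. emp_inner n X v (gs j))"
  unfolding emp_inner_def add_fun_def
  by (simp add: sum_distrib_left sum_divide_distrib[symmetric] sum.swap[of _ "{..<p}"])

lemma add_fun_diff: "add_fun p f x - add_fun p g x = add_fun p (\<lambda>j x. f j x - g j x) x"
  unfolding add_fun_def by (simp add: sum_subtractf)

lemma fun_subspace_lin:
  assumes "fun_subspace G" "f \<in> G" "g \<in> G"
  shows "(\<lambda>x. a * f x + b * g x) \<in> G"
proof -
  have "(\<lambda>x. a * f x) \<in> G" "(\<lambda>x. b * g x) \<in> G"
    using assms unfolding fun_subspace_def by blast+
  moreover have "\<forall>f\<in>G. \<forall>g\<in>G. (\<lambda>x. f x + g x) \<in> G"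
    using assms(1) unfolding fun_subspace_def by blast
  ultimately show ?thesis by simp
qed

lemma fun_subspace_diff: "fun_subspace G \<Longrightarrow> f \<in> G \<Longrightarrow> g \<in> G \<Longrightarrow> (\<lambda>x. f x - g x) \<in> G"
  using fun_subspace_lin[of G f g 1 "-1"] by simp

lemma seminorm_on_nonneg: "seminorm_on G N \<Longrightarrow> f \<in> G \<Longrightarrow> 0 \<le> N f"
  unfolding seminorm_on_def by blast

lemma seminorm_on_scale: "seminorm_on G N \<Longrightarrow> f \<in> G \<Longrightarrow> N (\<lambda>x. c * f x) = \<bar>c\<bar> * N f"
  unfolding seminorm_on_def by blast

lemma seminorm_on_lin:
  assumes "fun_subspace G" "seminorm_on G N" "f \<in> G" "g \<in> G"
  shows "N (\<lambda>x. a * f x + b * g x) \<le> \<bar>a\<bar> * N f + \<bar>b\<bar> * N g"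
proof -
  have af: "(\<lambda>x. a * f x) \<in> G" and bg: "(\<lambda>x. b * g x) \<in> G"
    using assms fun_subspace_lin[of G f f a 0] fun_subspace_lin[of G g g b 0] by auto
  have "\<forall>f\<in>G. \<forall>g\<in>G. N (\<lambda>x. f x + g x) \<le> N f + N g"
    using assms(2) unfolding seminorm_on_def by blast
  from this[rule_format, OF af bg]
  have "N (\<lambda>x. a * f x + b * g x) \<le> N (\<lambda>x. a * f x) + N (\<lambda>x. b * g x)"
    by simp
  then show ?thesis
    using seminorm_on_scale[OF assms(2,3), of a] seminorm_on_scale[OF assms(2,4), of b] by simp
qed

lemma seminorm_on_diff:
  "fun_subspace G \<Longrightarrow> seminorm_on G N \<Longrightarrow> f \<in> G \<Longrightarrow> g \<in> G \<Longrightarrow> N (\<lambda>x. f x - g x) \<le> N f + N g"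
  using seminorm_on_lin[of G N f g 1 "-1"] by simp

lemma penalty_convex_comb:
  assumes G: "\<forall>j<p. fun_subspace (G j) \<and> seminorm_on (G j) (Fn j)"
    and f: "\<forall>j<p. f j \<in> G j" and g: "\<forall>j<p. g j \<in> G j"
    and lam: "\<forall>j<p. 0 \<le> lam j" and rho: "\<forall>j<p. 0 \<le> rho j"
    and t: "0 \<le> t" "t \<le> 1"
  shows "penalty n X p Fn lam rho (\<lambda>j x. (1 - t) * f j x + t * g j x)
    \<le> (1 - t) * penalty n X p Fn lam rho f + t * penalty n X p Fn lam rho g"
proof -
  have "penalty n X p Fn lam rho (\<lambda>j x. (1 - t) * f j x + t * g j x)
      \<le> (\<Sum>j<p. rho j * ((1 - t) * Fn j (f j) + t * Fn j (g j))
                + lam j * ((1 - t) * emp_norm n X (f j) + t * emp_norm n X (g j)))"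
    unfolding penalty_def
    using G f g lam rho t seminorm_on_lin[of "G _" "Fn _" "f _" "g _" "1 - t" t]
      emp_norm_lin[of n X "1 - t" "f _" t "g _"]
    by (intro sum_mono add_mono mult_left_mono) auto
  also have "\<dots> = (1 - t) * penalty n X p Fn lam rho f + t * penalty n X p Fn lam rho g"
    unfolding penalty_def sum_distrib_left sum.distrib[symmetric]
    by (rule sum.cong) (simp_all add: algebra_simps)
  finally show ?thesis .
qed

lemma penalty_diff_le:
  assumes G: "\<forall>j<p. fun_subspace (G j) \<and> seminorm_on (G j) (Fn j)"
    and f: "\<forall>j<p. f j \<in> G j" and g: "\<forall>j<p. g j \<in> G j"
    and lam: "\<forall>j<p. 0 \<le> lam j" and rho: "\<forall>j<p. 0 \<le> rho j"
  shows "penalty n X p Fn lam rho (\<lambda>j x. f j x - g j x)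
    \<le> penalty n X p Fn lam rho f + penalty n X p Fn lam rho g"
proof -
  have "penalty n X p Fn lam rho (\<lambda>j x. f j x - g j x)
      \<le> (\<Sum>j<p. rho j * (Fn j (f j) + Fn j (g j)) + lam j * (emp_norm n X (f j) + emp_norm n X (g j)))"
    unfolding penalty_def
    using G f g lam rho seminorm_on_diff[of "G _" "Fn _" "f _" "g _"] emp_norm_diff
    by (intro sum_mono add_mono mult_left_mono) auto
  also have "\<dots> = penalty n X p Fn lam rho f + penalty n X p Fn lam rho g"
    unfolding penalty_def by (simp add: sum.distrib algebra_simps)
  finally show ?thesis .
qed

lemma emp_loss_segment:
  "emp_loss n X Y (\<lambda>x. f x + t * (g x - f x))
   = emp_loss n X Y f - 2 * t * emp_inner n X (\<lambda>i. Y i - f (X i)) (\<lambda>x. g x - f x)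
     + t\<^sup>2 * (emp_norm n X (\<lambda>x. g x - f x))\<^sup>2"
proof -
  have "(Y i - (f (X i) + t * (g (X i) - f (X i))))\<^sup>2
      = (Y i - f (X i))\<^sup>2 - 2 * t * ((Y i - f (X i)) * (g (X i) - f (X i)))
        + t\<^sup>2 * (g (X i) - f (X i))\<^sup>2" for i
    by (simp add: power2_eq_square algebra_simps)
  then show ?thesis
    unfolding emp_loss_def emp_inner_def emp_norm_sq
    by (simp add: sum.distrib sum_subtractf sum_distrib_left add_divide_distrib diff_divide_distrib)
qed

lemma emp_dist_three_point:
  assumes "\<forall>i<n. Y i = s (X i) + v i"
  shows "(emp_dist n X b s)\<^sup>2 = (emp_dist n X a s)\<^sup>2 + (emp_dist n X a b)\<^sup>2
    + 2 * emp_inner n X (\<lambda>i. Y i - a (X i)) (\<lambda>x. a x - b x)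
    - 2 * emp_inner n X v (\<lambda>x. a x - b x)"
proof -
  have "(b (X i) - s (X i))\<^sup>2 = (a (X i) - s (X i))\<^sup>2 + (a (X i) - b (X i))\<^sup>2
      + 2 * ((Y i - a (X i)) * (a (X i) - b (X i))) - 2 * (v i * (a (X i) - b (X i)))"
    if "i < n" for i
    using assms that by (simp add: power2_eq_square algebra_simps)
  then have "(\<Sum>i<n. (b (X i) - s (X i))\<^sup>2) = (\<Sum>i<n. (a (X i) - s (X i))\<^sup>2 + (a (X i) - b (X i))\<^sup>2
      + 2 * ((Y i - a (X i)) * (a (X i) - b (X i))) - 2 * (v i * (a (X i) - b (X i))))"
    by (intro sum.cong) auto
  then show ?thesis
    unfolding emp_dist_def emp_inner_def emp_norm_sq
    by (simp add: sum.distrib sum_subtractf sum_distrib_left add_divide_distrib diff_divide_distrib)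
qed

lemma nonneg_if_nonneg_perturbations:
  fixes q c :: real
  assumes c: "0 \<le> c" and H: "\<And>t. 0 < t \<Longrightarrow> t \<le> 1 \<Longrightarrow> 0 \<le> q + t * c"
  shows "0 \<le> q"
proof (rule ccontr)
  assume "\<not> 0 \<le> q"
  define t where "t = min 1 (- q / (2 * (c + 1)))"
  have "0 < - q / (2 * (c + 1))"
    using \<open>\<not> 0 \<le> q\<close> c by (intro divide_pos_pos) auto
  then have t: "0 < t" "t \<le> 1"
    unfolding t_def by auto
  have "t * c \<le> - q / (2 * (c + 1)) * c"
    using c unfolding t_def by (intro mult_right_mono) auto
  also have "\<dots> < - q"
    using \<open>\<not> 0 \<le> q\<close> c mult_nonneg_nonpos[of c q] by (simp add: field_simps)
  finally show False using H[OF t] by linarith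
qed

lemma penalized_minimizer_first_order:
  fixes gh gb :: "nat \<Rightarrow> 'x \<Rightarrow> real"
  assumes G: "\<forall>j<p. fun_subspace (G j) \<and> seminorm_on (G j) (Fn j)"
    and gh: "\<forall>j<p. gh j \<in> G j" and gb: "\<forall>j<p. gb j \<in> G j"
    and lam: "\<forall>j<p. 0 \<le> lam j" and rho: "\<forall>j<p. 0 \<le> rho j" and A0: "0 \<le> A0"
    and opt: "\<forall>gs. (\<forall>j<p. gs j \<in> G j) \<longrightarrow>
      emp_loss n X Y (add_fun p gh) / 2 + A0 * penalty n X p Fn lam rho gh
      \<le> emp_loss n X Y (add_fun p gs) / 2 + A0 * penalty n X p Fn lam rho gs"
  shows "A0 * (penalty n X p Fn lam rho gh - penalty n X p Fn lam rho gb)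
    \<le> emp_inner n X (\<lambda>i. Y i - add_fun p gh (X i)) (\<lambda>x. add_fun p gh x - add_fun p gb x)"
    (is "A0 * (?Rh - ?Rb) \<le> ?D")
proof -
  let ?d = "\<lambda>x. add_fun p gb x - add_fun p gh x"
  have D: "emp_inner n X (\<lambda>i. Y i - add_fun p gh (X i)) ?d = - ?D"
  proof -
    have "(\<Sum>i<n. v i * (add_fun p gb (X i) - add_fun p gh (X i)))
        = - (\<Sum>i<n. v i * (add_fun p gh (X i) - add_fun p gb (X i)))" for v :: "nat \<Rightarrow> real"
      by (simp add: sum_negf[symmetric] algebra_simps)
    then show ?thesis
      unfolding emp_inner_def by simp
  qed
  have perturbed: "0 \<le> A0 * (?Rb - ?Rh) + ?D + t * ((emp_norm n X ?d)\<^sup>2 / 2)"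
    if t: "0 < t" "t \<le> 1" for t
  proof -
    define gt where "gt j x = (1 - t) * gh j x + t * gb j x" for j x
    have "\<forall>j<p. gt j \<in> G j"
      using G gh gb unfolding gt_def by (auto intro: fun_subspace_lin)
    with opt have "emp_loss n X Y (add_fun p gh) / 2 + A0 * ?Rh
        \<le> emp_loss n X Y (add_fun p gt) / 2 + A0 * penalty n X p Fn lam rho gt" by blast
    also have "add_fun p gt = (\<lambda>x. add_fun p gh x + t * ?d x)"
      unfolding gt_def add_fun_def
      by (simp add: sum.distrib sum_distrib_left sum_subtractf algebra_simps)
    also have "penalty n X p Fn lam rho gt \<le> (1 - t) * ?Rh + t * ?Rb"
      unfolding gt_def using penalty_convex_comb[OF G gh gb lam rho] t by simp
    finally have descent: "emp_loss n X Y (add_fun p gh) / 2 + A0 * ?Rh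
        \<le> emp_loss n X Y (\<lambda>x. add_fun p gh x + t * ?d x) / 2 + A0 * ((1 - t) * ?Rh + t * ?Rb)"
      using A0 by (simp add: mult_left_mono)
    have expansion: "emp_loss n X Y (\<lambda>x. add_fun p gh x + t * ?d x)
        = emp_loss n X Y (add_fun p gh) + 2 * t * ?D + t\<^sup>2 * (emp_norm n X ?d)\<^sup>2"
      using emp_loss_segment[of n X Y "add_fun p gh" t "add_fun p gb"] D by simp
    have quadratic: "0 \<le> t * (A0 * (Rb - Rh) + I + t * (N / 2))"
      if "L / 2 + A0 * Rh \<le> E / 2 + A0 * ((1 - t) * Rh + t * Rb)" "E = L + 2 * t * I + t\<^sup>2 * N"
      for L E I N Rh Rb :: real
      using that by (simp add: field_simps power2_eq_square)
    have "0 \<le> t * (A0 * (?Rb - ?Rh) + ?D + t * ((emp_norm n X ?d)\<^sup>2 / 2))"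
      by (rule quadratic[OF descent expansion])
    with t show ?thesis by (simp add: zero_le_mult_iff)
  qed
  have "0 \<le> (emp_norm n X ?d)\<^sup>2 / 2"
    by simp
  from nonneg_if_nonneg_perturbations[OF this perturbed]
  have "0 \<le> A0 * (?Rb - ?Rh) + ?D" .
  then show ?thesis
    by (simp add: algebra_simps)
qed

lemma emp_inner_add_fun_le_penalty:
  assumes noise: "\<forall>j<p. \<forall>f\<in>G j. \<bar>emp_inner n X v f\<bar> \<le> rho j * Fn j f + lam j * emp_norm n X f"
    and f: "\<forall>j<p. f j \<in> G j"
  shows "emp_inner n X v (add_fun p f) \<le> penalty n X p Fn lam rho f"
  unfolding emp_inner_add_fun penalty_def
proof (rule sum_mono)
  fix j assume "j \<in> {..<p}"
  then show "emp_inner n X v (f j) \<le> rho j * Fn j (f j) + lam j * emp_norm n X (f j)"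
    using noise f by (meson abs_ge_self lessThan_iff order_trans)
qed

lemma penalized_least_squares_oracle_inequality:
  fixes gh gb :: "nat \<Rightarrow> 'x \<Rightarrow> real"
  assumes G: "\<forall>j<p. fun_subspace (G j) \<and> seminorm_on (G j) (Fn j)"
    and gh: "\<forall>j<p. gh j \<in> G j" and gb: "\<forall>j<p. gb j \<in> G j"
    and lam: "\<forall>j<p. 0 \<le> lam j" and rho: "\<forall>j<p. 0 \<le> rho j" and A0: "0 \<le> A0"
    and noise: "\<forall>j<p. \<forall>f\<in>G j. \<bar>emp_inner n X v f\<bar> \<le> rho j * Fn j f + lam j * emp_norm n X f"
    and opt: "\<forall>gs. (\<forall>j<p. gs j \<in> G j) \<longrightarrow>
      emp_loss n X (\<lambda>i. gstar (X i) + v i) (add_fun p gh) / 2 + A0 * penalty n X p Fn lam rho gh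
      \<le> emp_loss n X (\<lambda>i. gstar (X i) + v i) (add_fun p gs) / 2 + A0 * penalty n X p Fn lam rho gs"
  shows "(emp_dist n X (add_fun p gh) gstar)\<^sup>2 / 2
         + (emp_dist n X (add_fun p gh) (add_fun p gb))\<^sup>2 / 2
         + (A0 - 1) * penalty n X p Fn lam rho (\<lambda>j x. gh j x - gb j x)
         \<le> (emp_dist n X (add_fun p gb) gstar)\<^sup>2 / 2
           + 2 * A0 * penalty n X p Fn lam rho gb"
proof -
  let ?Y = "\<lambda>i. gstar (X i) + v i"
  let ?Rh = "penalty n X p Fn lam rho gh" and ?Rb = "penalty n X p Fn lam rho gb"
    and ?RD = "penalty n X p Fn lam rho (\<lambda>j x. gh j x - gb j x)"
  let ?D = "emp_inner n X (\<lambda>i. ?Y i - add_fun p gh (X i)) (\<lambda>x. add_fun p gh x - add_fun p gb x)"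
  have first_order: "A0 * (?Rh - ?Rb) \<le> ?D"
    by (rule penalized_minimizer_first_order[OF G gh gb lam rho A0 opt])
  have "(\<lambda>x. add_fun p gh x - add_fun p gb x) = add_fun p (\<lambda>j x. gh j x - gb j x)"
    by (simp add: add_fun_diff)
  moreover have "\<forall>j<p. (\<lambda>x. gh j x - gb j x) \<in> G j"
    using G gh gb by (auto intro: fun_subspace_diff)
  ultimately have noise_term: "emp_inner n X v (\<lambda>x. add_fun p gh x - add_fun p gb x) \<le> ?RD"
    using emp_inner_add_fun_le_penalty[OF noise] by simp
  have "A0 * ?RD \<le> A0 * (?Rh + ?Rb)"
    using penalty_diff_le[OF G gh gb lam rho] A0 by (rule mult_left_mono)
  moreover have "(emp_dist n X (add_fun p gb) gstar)\<^sup>2 = (emp_dist n X (add_fun p gh) gstar)\<^sup>2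
      + (emp_dist n X (add_fun p gh) (add_fun p gb))\<^sup>2 + 2 * ?D
      - 2 * emp_inner n X v (\<lambda>x. add_fun p gh x - add_fun p gb x)"
    by (rule emp_dist_three_point) simp
  ultimately show ?thesis
    using first_order noise_term by (simp add: algebra_simps)
qed

lemma emp_inner_bound_by_local_class:
  assumes G: "fun_subspace G" "seminorm_on G N" and w: "0 < w" and f: "f \<in> G"
    and local: "\<forall>h\<in>local_class n X G N w. \<bar>emp_inner n X v h\<bar> \<le> B"
  shows "\<bar>emp_inner n X v f\<bar> \<le> B * (N f + emp_norm n X f / w)"
proof -
  define s where "s = N f + emp_norm n X f / w"
  have nonneg: "0 \<le> N f" "0 \<le> emp_norm n X f / w"
    using seminorm_on_nonneg[OF G(2) f] emp_norm_nonneg[of n X f] w by auto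
  show ?thesis
  proof (cases "s = 0")
    case True
    with nonneg have "emp_norm n X f / w = 0"
      unfolding s_def by linarith
    with w have "emp_inner n X v f = 0"
      unfolding emp_inner_def by (simp add: emp_norm_eq_0_imp)
    with True show ?thesis
      unfolding s_def by simp
  next
    case False
    with nonneg have s: "0 < s"
      unfolding s_def by linarith
    define h where "h = (\<lambda>x. (1 / s) * f x)"
    have "N h + emp_norm n X h / w = (N f + emp_norm n X f / w) / s"
      unfolding h_def seminorm_on_scale[OF G(2) f] emp_norm_scale
      using s by (simp add: field_simps)
    then have "N h + emp_norm n X h / w = s / s"
      unfolding s_def .
    moreover have "h \<in> G"
      unfolding h_def using fun_subspace_lin[OF G(1) f f, of "1 / s" 0] by simp
    ultimately have "h \<in> local_class n X G N w"
      unfolding local_class_def using s by simp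
    with local have "\<bar>emp_inner n X v h\<bar> \<le> B" by blast
    moreover have "\<bar>emp_inner n X v f\<bar> = s * \<bar>emp_inner n X v h\<bar>"
      unfolding h_def emp_inner_scale using s by (simp add: abs_mult)
    ultimately show ?thesis
      using s unfolding s_def by (simp add: mult.commute mult_right_mono)
  qed
qed

lemma local_class_emp_norm_le:
  assumes "seminorm_on G N" "0 < \<delta>" "f \<in> local_class n X G N \<delta>"
  shows "emp_norm n X f \<le> \<delta>"
proof -
  have "f \<in> G" "N f + emp_norm n X f / \<delta> \<le> 1"
    using assms(3) unfolding local_class_def by auto
  moreover have "0 \<le> N f"
    using seminorm_on_nonneg[OF assms(1) \<open>f \<in> G\<close>] .
  ultimately have "emp_norm n X f / \<delta> \<le> 1" by linarith
  with assms(2) show ?thesis by (simp add: divide_le_eq)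
qed

text \<open>The supremum over F is uncountable, but each of its events is the preimage of an open set
  of noise vectors, so by Lindelof a countable subfamily of F gives the same union.\<close>
lemma noise_exceedance_event_measurable:
  fixes e :: "nat \<Rightarrow> 'w \<Rightarrow> real" and F :: "('x \<Rightarrow> real) set"
  assumes e: "\<forall>i<n. e i \<in> borel_measurable M"
  shows "{\<omega> \<in> space M. \<exists>f\<in>F. c < \<bar>emp_inner n X (\<lambda>i. e i \<omega>) f\<bar> / C} \<in> sets M"
proof -
  define U where "U f = {u :: nat \<Rightarrow> real. c < \<bar>emp_inner n X u f\<bar> / C}" for f
  have open_U: "open (U f)" for f
  proof -
    have "continuous_on UNIV
        (\<lambda>u :: nat \<Rightarrow> real. \<bar>(\<Sum>i<n. u i * f (X i)) * inverse (real n)\<bar> * inverse C)"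
      by (intro continuous_intros continuous_on_product_coordinates)
    then show ?thesis
      unfolding U_def emp_inner_def divide_inverse
      by (intro open_Collect_less) (auto intro: continuous_intros simp: continuous_on_eq_continuous_at)
  qed
  obtain FF where FF: "FF \<subseteq> U ` F" "countable FF" "\<Union>FF = \<Union>(U ` F)"
    by (rule Lindelof[of "U ` F"]) (use open_U in auto)
  then obtain F' where F': "countable F'" "F' \<subseteq> F" "FF = U ` F'"
    using countable_subset_image[of FF U F] by blast
  have "(\<exists>f\<in>F. (\<lambda>i. e i \<omega>) \<in> U f) \<longleftrightarrow> (\<exists>f\<in>F'. (\<lambda>i. e i \<omega>) \<in> U f)" for \<omega>
    using FF(3) F'(3) by blast
  then have "{\<omega> \<in> space M. \<exists>f\<in>F. c < \<bar>emp_inner n X (\<lambda>i. e i \<omega>) f\<bar> / C}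
      = (\<Union>f\<in>F'. {\<omega> \<in> space M. c < \<bar>(\<Sum>i<n. e i \<omega> * f (X i)) / real n\<bar> / C})"
    unfolding U_def emp_inner_def by auto
  also have "\<dots> \<in> sets M"
    by (intro sets.countable_UN'' F'(1); measurable) (use e in auto)
  finally show ?thesis .
qed

lemma tune_lambda_nonneg:
  assumes "0 \<le> psi j (w j)" "0 < w j" "1 \<le> real p / eps" "0 \<le> C1"
  shows "0 \<le> tune_lambda n p eps C1 psi w j"
  unfolding tune_lambda_def using assms by simp

lemma tune_threshold_eq:
  assumes "0 < n" "0 < w j"
  shows "C1 * (psi j (w j) / sqrt (real n) + w j * sqrt (ln (real p / eps) / real n)) * (N + m / w j)
    = tune_rho n p eps C1 psi w j * N + tune_lambda n p eps C1 psi w j * m"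
proof -
  have "C1 * (P / r + w * q) * (N + m / w) = C1 * (P / (r * w) + q) * w * N + C1 * (P / (r * w) + q) * m"
    if "0 < r" "0 < w" for P r w q :: real
    using that by (simp add: field_simps)
  then show ?thesis
    unfolding tune_rho_def tune_lambda_def using assms by simp
qed

lemma noise_bounded_with_high_probability:
  fixes M :: "'w measure" and e :: "nat \<Rightarrow> 'w \<Rightarrow> real" and X :: "nat \<Rightarrow> 'x"
  assumes M: "prob_space M" and n: "0 < n" and p: "0 < p"
    and e: "\<forall>i<n. e i \<in> borel_measurable M"
    and C1: "0 < C1" "sub_gaussian_concentration M n X e C1"
    and G: "\<forall>j<p. fun_subspace (G j) \<and> seminorm_on (G j) (Fn j)"
    and w: "\<forall>j<p. 0 < w j"
    and entropy: "\<forall>j<p. real_ge_integral (psi j (w j))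
      (entropy_integral (emp_dist n X) (w j) (local_class n X (G j) (Fn j) (w j)))"
    and eps: "0 < eps" "eps < 1"
  shows "\<exists>A\<in>sets M. 1 - eps \<le> measure M A \<and> (\<forall>\<omega>\<in>A. \<forall>j<p. \<forall>f\<in>G j.
    \<bar>emp_inner n X (\<lambda>i. e i \<omega>) f\<bar>
      \<le> tune_rho n p eps C1 psi w j * Fn j f + tune_lambda n p eps C1 psi w j * emp_norm n X f)"
proof -
  interpret prob_space M by (rule M)
  define t where "t = ln (real p / eps)"
  have "1 < real p / eps"
    using p eps by (simp add: field_simps)
  then have t: "0 < t" "exp (- t) = eps / real p"
    unfolding t_def using eps by (simp_all add: exp_minus)
  define B where "B j = {\<omega> \<in> space M. \<exists>f\<in>local_class n X (G j) (Fn j) (w j).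
    psi j (w j) / sqrt (real n) + w j * sqrt (t / real n) < \<bar>emp_inner n X (\<lambda>i. e i \<omega>) f\<bar> / C1}" for j
  have B_sets: "B j \<in> sets M" for j
    unfolding B_def using e by (rule noise_exceedance_event_measurable)
  have B_small: "measure M (B j) \<le> eps / real p" if "j < p" for j
  proof -
    have "\<forall>f\<in>local_class n X (G j) (Fn j) (w j). emp_norm n X f \<le> w j"
      using local_class_emp_norm_le G w that by blast
    then have "measure M (B j) \<le> exp (- t)"
      using C1(2) w entropy that t(1) unfolding sub_gaussian_concentration_def B_def by blast
    with t(2) show ?thesis by simp
  qed
  define A where "A = space M - (\<Union>j<p. B j)"
  have union_sets: "(\<Union>j<p. B j) \<in> sets M"
    using B_sets by auto
  have "measure M (\<Union>j<p. B j) \<le> (\<Sum>j<p. measure M (B j))"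
    using B_sets by (intro finite_measure_subadditive_finite) auto
  also have "\<dots> \<le> (\<Sum>j<p. eps / real p)"
    using B_small by (intro sum_mono) auto
  also have "\<dots> = eps"
    using p by simp
  finally have "1 - eps \<le> measure M A"
    unfolding A_def using prob_compl[OF union_sets] by simp
  moreover have "\<bar>emp_inner n X (\<lambda>i. e i \<omega>) f\<bar>
      \<le> tune_rho n p eps C1 psi w j * Fn j f + tune_lambda n p eps C1 psi w j * emp_norm n X f"
    if \<omega>: "\<omega> \<in> A" and j: "j < p" and f: "f \<in> G j" for \<omega> j f
  proof -
    have "\<omega> \<notin> B j" "\<omega> \<in> space M"
      using \<omega> j unfolding A_def by auto
    then have "\<forall>h\<in>local_class n X (G j) (Fn j) (w j). \<bar>emp_inner n X (\<lambda>i. e i \<omega>) h\<bar> / C1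
        \<le> psi j (w j) / sqrt (real n) + w j * sqrt (t / real n)"
      unfolding B_def by auto
    then have "\<forall>h\<in>local_class n X (G j) (Fn j) (w j). \<bar>emp_inner n X (\<lambda>i. e i \<omega>) h\<bar>
        \<le> C1 * (psi j (w j) / sqrt (real n) + w j * sqrt (t / real n))"
      by (simp add: pos_divide_le_eq[OF C1(1)] mult.commute)
    then have "\<bar>emp_inner n X (\<lambda>i. e i \<omega>) f\<bar>
        \<le> C1 * (psi j (w j) / sqrt (real n) + w j * sqrt (t / real n)) * (Fn j f + emp_norm n X f / w j)"
      using emp_inner_bound_by_local_class G w j f by blast
    then show ?thesis
      unfolding t_def tune_threshold_eq[where w = w and j = j, OF n w[rule_format, OF j]] .
  qed
  moreover have "A \<in> sets M"
    unfolding A_def using union_sets by auto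
  ultimately show ?thesis by blast
qed

theorem corollary1:
  fixes M :: "'w measure" and n p :: nat and X :: "nat \<Rightarrow> real ^ 'd"
    and S :: "nat \<Rightarrow> 'd set" and G :: "nat \<Rightarrow> (real ^ 'd \<Rightarrow> real) set"
    and Fn :: "nat \<Rightarrow> (real ^ 'd \<Rightarrow> real) \<Rightarrow> real"
    and gstar :: "real ^ 'd \<Rightarrow> real" and e :: "nat \<Rightarrow> 'w \<Rightarrow> real"
    and D0 D1 C1 eps A0 :: real and w :: "nat \<Rightarrow> real" and psi :: "nat \<Rightarrow> real \<Rightarrow> real"
    and gbar :: "nat \<Rightarrow> real ^ 'd \<Rightarrow> real"
  assumes M: "prob_space M"
    and n: "n > 0" and p: "p > 0"
    and G: "\<forall>j<p. fun_subspace (G j) \<and> seminorm_on (G j) (Fn j)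
                  \<and> (\<forall>g\<in>G j. depends_only_on (S j) g)"
    and e_meas: "\<forall>i<n. e i \<in> borel_measurable M"
    and e_indep: "prob_space.indep_vars M (\<lambda>_. borel) e {..<n}"
    and e_mean: "\<forall>i<n. integrable M (e i) \<and> (\<integral>\<omega>. e i \<omega> \<partial>M) = 0"
    and D0: "D0 > 0"
    and subgauss: "\<forall>i<n. integrable M (\<lambda>\<omega>. exp ((e i \<omega>)\<^sup>2 / D0))
                       \<and> D0 * (\<integral>\<omega>. exp ((e i \<omega>)\<^sup>2 / D0) \<partial>M) \<le> D1"
    and C1: "C1 > 0" "sub_gaussian_concentration M n X e C1"
    and entropy: "\<forall>j<p. \<forall>\<delta>. 0 < \<delta> \<and> \<delta> \<le> 1 \<longrightarrow>
        real_ge_integral (psi j \<delta>)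
          (entropy_integral (emp_dist n X) \<delta> (local_class n X (G j) (Fn j) \<delta>))"
    and eps: "0 < eps" "eps < 1"
    and w: "\<forall>j<p. 0 < w j \<and> w j \<le> 1"
    and A0: "A0 > 1"
    and gbar: "\<forall>j<p. gbar j \<in> G j"
  shows "\<exists>A\<in>sets M. measure M A \<ge> 1 - eps \<and>
    (\<forall>\<omega>\<in>A. \<forall>gh :: nat \<Rightarrow> real ^ 'd \<Rightarrow> real.
      let lam = tune_lambda n p eps C1 psi w;
          rho = tune_rho n p eps C1 psi w;
          Y = (\<lambda>i. gstar (X i) + e i \<omega>);
          K = (\<lambda>gs. emp_loss n X Y (add_fun p gs) / 2 + A0 * penalty n X p Fn lam rho gs)
      in ((\<forall>j<p. gh j \<in> G j) \<and> (\<forall>gs. (\<forall>j<p. gs j \<in> G j) \<longrightarrow> K gh \<le> K gs)) \<longrightarrow>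
         (emp_dist n X (add_fun p gh) gstar)\<^sup>2 / 2
         + (emp_dist n X (add_fun p gh) (add_fun p gbar))\<^sup>2 / 2
         + (A0 - 1) * penalty n X p Fn lam rho (\<lambda>j x. gh j x - gbar j x)
         \<le> (emp_dist n X (add_fun p gbar) gstar)\<^sup>2 / 2
           + 2 * A0 * penalty n X p Fn lam rho gbar)"
proof -
  have G_seminormed: "\<forall>j<p. fun_subspace (G j) \<and> seminorm_on (G j) (Fn j)"
    using G by blast
  have entropy_at_w: "\<forall>j<p. real_ge_integral (psi j (w j))
      (entropy_integral (emp_dist n X) (w j) (local_class n X (G j) (Fn j) (w j)))"
    using entropy w by blast
  have w_pos: "\<forall>j<p. 0 < w j"
    using w by blast
  obtain A where A: "A \<in> sets M" "1 - eps \<le> measure M A"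
    and noise: "\<forall>\<omega>\<in>A. \<forall>j<p. \<forall>f\<in>G j. \<bar>emp_inner n X (\<lambda>i. e i \<omega>) f\<bar>
      \<le> tune_rho n p eps C1 psi w j * Fn j f + tune_lambda n p eps C1 psi w j * emp_norm n X f"
    using noise_bounded_with_high_probability[where G = G and Fn = Fn and w = w and psi = psi,
        OF M n p e_meas C1 G_seminormed w_pos entropy_at_w eps]
    by blast
  have "1 \<le> real p / eps"
    using p eps by (simp add: field_simps)
  then have lam: "\<forall>j<p. 0 \<le> tune_lambda n p eps C1 psi w j"
    using tune_lambda_nonneg entropy_at_w w_pos C1(1) unfolding real_ge_integral_def
    by (simp add: less_imp_le)
  then have rho: "\<forall>j<p. 0 \<le> tune_rho n p eps C1 psi w j"
    unfolding tune_rho_def using w_pos by (simp add: less_imp_le)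
  note inequality_on_event =
    penalized_least_squares_oracle_inequality[OF G_seminormed _ gbar lam rho _ noise[THEN bspec]]
  show ?thesis
    unfolding Let_def
    using A A0 by (intro bexI[of _ A] conjI ballI allI impI) (auto intro!: inequality_on_event)
qed

end
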